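(* If $S=\{v_1,\ldots,v_n\}\subset\mathbb Z^n$ is an orthogonal subset with $|V_\alpha|\ge2$ for all $\alpha$, then $p_1(S)=0$.
   Context: $\mathbb Z^n$ carries the standard dot product with standard basis $e_1,\ldots,e_n$. $S$ is orthogonal if $\langle v_i,v_i\rangle\ge1$ for all $i$ and $\langle v_i,v_j\rangle=0$ for $i\ne j$. $V_\alpha=\{j:\langle v_\alpha,e_j\rangle\ne0\}$, $E_j=\{\alpha:\langle v_\alpha,e_j\rangle\ne0\}$, and $p_1(S)=|\{j:|E_j|=1\}|$. *)

theory Defs
  imports Main
begin

text \<open>Vectors of Z^n are represented as functions nat => int; only coordinates 0..n-1 matter.
  The family v_1,...,v_n is indexed by alpha in {0..<n}.\<close>

definition dotZ :: "nat \<Rightarrow> (nat \<Rightarrow> int) \<Rightarrow> (nat \<Rightarrow> int) \<Rightarrow> int" where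
  "dotZ n x y = (\<Sum>j<n. x j * y j)"

definition std_basis :: "nat \<Rightarrow> nat \<Rightarrow> int" where
  "std_basis j = (\<lambda>i. if i = j then 1 else 0)"

definition orthogonal_family :: "nat \<Rightarrow> (nat \<Rightarrow> nat \<Rightarrow> int) \<Rightarrow> bool" where
  "orthogonal_family n v \<longleftrightarrow>
     (\<forall>\<alpha><n. dotZ n (v \<alpha>) (v \<alpha>) \<ge> 1) \<and>
     (\<forall>\<alpha><n. \<forall>\<beta><n. \<alpha> \<noteq> \<beta> \<longrightarrow> dotZ n (v \<alpha>) (v \<beta>) = 0)"

definition Vset :: "nat \<Rightarrow> (nat \<Rightarrow> nat \<Rightarrow> int) \<Rightarrow> nat \<Rightarrow> nat set" where
  "Vset n v \<alpha> = {j. j < n \<and> dotZ n (v \<alpha>) (std_basis j) \<noteq> 0}"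

definition Eset :: "nat \<Rightarrow> (nat \<Rightarrow> nat \<Rightarrow> int) \<Rightarrow> nat \<Rightarrow> nat set" where
  "Eset n v j = {\<alpha>. \<alpha> < n \<and> dotZ n (v \<alpha>) (std_basis j) \<noteq> 0}"

definition p1 :: "nat \<Rightarrow> (nat \<Rightarrow> nat \<Rightarrow> int) \<Rightarrow> nat" where
  "p1 n v = card {j. j < n \<and> card (Eset n v j) = 1}"

end

theory Submission
  imports Defs "Jordan_Normal_Form.Determinant"
begin

text \<open>If A is the matrix with rows v_1, ..., v_n, then A^T with its columns divided by the
  squared norms |v_b|^2 is a right inverse of A; a one-sided inverse of a square matrix is two-sided,
  so the columns are orthogonal for the weights 1/|v_b|^2. If coordinate j is used by v_a
  alone, orthogonality of column j to any other column i collapses to v_a(i) v_a(j) = 0,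
  so v_a is supported on {j}, contradicting |V_a| >= 2.\<close>

lemma dotZ_std_basis: "j < n \<Longrightarrow> dotZ n x (std_basis j) = x j"
  unfolding dotZ_def std_basis_def
  by (simp add: if_distrib sum.delta cong: if_cong)

lemma Vset_conv: "Vset n v \<alpha> = {j. j < n \<and> v \<alpha> j \<noteq> 0}"
  unfolding Vset_def by (auto simp: dotZ_std_basis)

lemma Eset_conv: "j < n \<Longrightarrow> Eset n v j = {\<alpha>. \<alpha> < n \<and> v \<alpha> j \<noteq> 0}"
  unfolding Eset_def by (simp add: dotZ_std_basis)

lemma orthogonal_family_columns_orthonormal:
  fixes v :: "nat \<Rightarrow> nat \<Rightarrow> int"
  assumes orth: "orthogonal_family n v" and i: "i < n" and j: "j < n"
  shows "(\<Sum>\<beta><n. of_int (v \<beta> i) * of_int (v \<beta> j) / of_int (dotZ n (v \<beta>) (v \<beta>)))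
         = (if i = j then 1 else (0 :: real))"
proof -
  define d where "d \<beta> = real_of_int (dotZ n (v \<beta>) (v \<beta>))" for \<beta>
  have d_nonzero: "\<beta> < n \<Longrightarrow> d \<beta> \<noteq> 0" for \<beta>
    using orth unfolding orthogonal_family_def d_def by force
  have rows_orthogonal: "(\<Sum>k<n. real_of_int (v \<alpha> k) * real_of_int (v \<gamma> k))
      = (if \<alpha> = \<gamma> then d \<alpha> else 0)" if "\<alpha> < n" "\<gamma> < n" for \<alpha> \<gamma>
  proof -
    have "(\<Sum>k<n. real_of_int (v \<alpha> k) * real_of_int (v \<gamma> k)) = of_int (dotZ n (v \<alpha>) (v \<gamma>))"
      unfolding dotZ_def by simp
    then show ?thesis
      using orth that unfolding orthogonal_family_def d_def by auto
  qed
  define A :: "real mat" where "A = mat n n (\<lambda>(\<alpha>, k). of_int (v \<alpha> k))"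
  define B :: "real mat" where "B = mat n n (\<lambda>(k, \<gamma>). of_int (v \<gamma> k) / d \<gamma>)"
  have "A * B = 1\<^sub>m n"
  proof (rule eq_matI)
    fix \<alpha> \<gamma> assume "\<alpha> < dim_row (1\<^sub>m n)" "\<gamma> < dim_col (1\<^sub>m n)"
    then have \<alpha>: "\<alpha> < n" and \<gamma>: "\<gamma> < n" by auto
    have "(A * B) $$ (\<alpha>, \<gamma>) = (\<Sum>k<n. of_int (v \<alpha> k) * of_int (v \<gamma> k)) / d \<gamma>"
      using \<alpha> \<gamma> unfolding A_def B_def
      by (simp add: scalar_prod_def sum_divide_distrib atLeast0LessThan)
    then show "(A * B) $$ (\<alpha>, \<gamma>) = 1\<^sub>m n $$ (\<alpha>, \<gamma>)"
      using rows_orthogonal[OF \<alpha> \<gamma>] d_nonzero[OF \<gamma>] \<alpha> \<gamma> by simp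
  qed (auto simp: A_def B_def)
  then have "B * A = 1\<^sub>m n"
    by (rule mat_mult_left_right_inverse[rotated 2]) (auto simp: A_def B_def)
  moreover have "(B * A) $$ (i, j) = (\<Sum>\<beta><n. of_int (v \<beta> i) * of_int (v \<beta> j) / d \<beta>)"
    using i j unfolding A_def B_def by (simp add: scalar_prod_def atLeast0LessThan)
  ultimately show ?thesis
    using i j unfolding d_def by simp
qed

lemma Vset_subset_if_Eset_singleton:
  assumes orth: "orthogonal_family n v" and j: "j < n" and E: "Eset n v j = {\<alpha>}"
  shows "Vset n v \<alpha> \<subseteq> {j}"
proof
  fix i assume "i \<in> Vset n v \<alpha>"
  then have i: "i < n" and v\<alpha>i: "v \<alpha> i \<noteq> 0" by (auto simp: Vset_conv)
  have \<alpha>: "\<alpha> < n" and v\<alpha>j: "v \<alpha> j \<noteq> 0" using E by (auto simp: Eset_conv[OF j])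
  have others: "v \<beta> j = 0" if "\<beta> < n" "\<beta> \<noteq> \<alpha>" for \<beta>
    using E that by (auto simp: Eset_conv[OF j])
  have d\<alpha>: "dotZ n (v \<alpha>) (v \<alpha>) \<noteq> 0"
    using orth \<alpha> unfolding orthogonal_family_def by force
  let ?w = "\<lambda>\<beta>. of_int (v \<beta> i) * of_int (v \<beta> j) / of_int (dotZ n (v \<beta>) (v \<beta>)) :: real"
  have "(\<Sum>\<beta><n. ?w \<beta>) = ?w \<alpha>"
    using \<alpha> others by (subst sum.remove[of _ \<alpha>]) (auto intro!: sum.neutral)
  moreover have "?w \<alpha> \<noteq> 0"
    using v\<alpha>i v\<alpha>j d\<alpha> by simp
  ultimately show "i \<in> {j}"
    using orthogonal_family_columns_orthonormal[OF orth i j] by (auto split: if_splits)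
qed

theorem lemma4p1:
  fixes n :: nat and v :: "nat \<Rightarrow> nat \<Rightarrow> int"
  assumes "orthogonal_family n v"
    and "\<forall>\<alpha><n. card (Vset n v \<alpha>) \<ge> 2"
  shows "p1 n v = 0"
proof (rule ccontr)
  assume "p1 n v \<noteq> 0"
  then obtain j where j: "j < n" and "card (Eset n v j) = 1"
    unfolding p1_def by (metis (mono_tags, lifting) card.empty empty_Collect_eq)
  then obtain \<alpha> where E: "Eset n v j = {\<alpha>}" by (meson card_1_singletonE)
  then have "\<alpha> < n" by (auto simp: Eset_def)
  then have "2 \<le> card (Vset n v \<alpha>)" using assms(2) by blast
  also have "\<dots> \<le> card {j}"
    using Vset_subset_if_Eset_singleton[OF assms(1) j E] by (intro card_mono) auto
  finally show False by simp
qed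

end
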